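(* Let $A=\mathrm{diag}(\mathbf{a})$ with $\mathbf{a}\in\mathbb{R}^n$, $\beta>0$, $f(\mathbf{z})=\frac12\mathbf{z}^*A\mathbf{z}+\frac{\beta}{2}\sum_k|z_k|^4$, let $W\in\mathbb{C}^{n\times n}$ be Hermitian and $\sigma>0$, and set $f_\sigma(\mathbf{z})=f(\mathbf{z})+\frac{\sigma}{2}\mathbf{z}^*W\mathbf{z}$. Suppose $\mathbf{z}_0$ is a global minimizer of $f$ on $\mathbb{CS}^{n-1}$ and $\mathbf{y}\in\mathbb{CS}^{n-1}$ satisfies $f_\sigma(\mathbf{y})\le\min_{\mathbf{z}\in\llbracket\mathbf{z}_0\rrbracket}f_\sigma(\mathbf{z})$. Then $\min_{\mathbf{z}\in\llbracket\mathbf{z}_0\rrbracket}\|\mathbf{y}-\mathbf{z}\|_4\le\sqrt[3]{2\sigma\beta^{-1}\|W\|_2\,n^{1/4}}$.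
   Context: $\mathbb{CS}^{n-1}$ is the unit sphere of $\mathbb{C}^n$; $\llbracket\mathbf{z}_0\rrbracket=\{\mathbf{y}\in\mathbb{C}^n:|y_k|=|(z_0)_k|\ \forall k\}$; $\|W\|_2$ is the spectral norm. *)

theory Defs
  imports "HOL-Analysis.Analysis"
begin

text \<open>Vectors in C^n are modelled as complex ^ 'n (n = CARD('n)); the Euclidean
  norm on this type is the usual 2-norm, so the unit sphere is norm z = 1.\<close>

definition hermitian :: "complex ^ 'n ^ 'n \<Rightarrow> bool" where
  "hermitian W \<longleftrightarrow> (\<forall>i j. W $ i $ j = cnj (W $ j $ i))"

definition qform :: "complex ^ 'n ^ 'n \<Rightarrow> complex ^ 'n \<Rightarrow> complex" where
  "qform W z = (\<Sum>i\<in>UNIV. \<Sum>j\<in>UNIV. cnj (z $ i) * W $ i $ j * z $ j)"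

definition fobj :: "real ^ 'n \<Rightarrow> real \<Rightarrow> complex ^ 'n \<Rightarrow> real" where
  "fobj a \<beta> z = (1/2) * (\<Sum>k\<in>UNIV. a $ k * (cmod (z $ k))^2)
                 + (\<beta>/2) * (\<Sum>k\<in>UNIV. (cmod (z $ k))^4)"

definition fsig :: "real ^ 'n \<Rightarrow> real \<Rightarrow> real \<Rightarrow> complex ^ 'n ^ 'n \<Rightarrow> complex ^ 'n \<Rightarrow> real" where
  "fsig a \<beta> \<sigma> W z = fobj a \<beta> z + (\<sigma>/2) * Re (qform W z)"

definition phase_class :: "complex ^ 'n \<Rightarrow> (complex ^ 'n) set" where
  "phase_class z0 = {y. \<forall>k. cmod (y $ k) = cmod (z0 $ k)}"

definition norm4 :: "complex ^ 'n \<Rightarrow> real" where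
  "norm4 x = (\<Sum>k\<in>UNIV. (cmod (x $ k))^4) powr (1/4)"

definition spec_norm :: "complex ^ 'n ^ 'n \<Rightarrow> real" where
  "spec_norm W = onorm (\<lambda>x. W *v x)"

end

theory Submission
  imports Defs
begin

(* The objective f depends on z only through the squared moduli w_k = |z_k|^2, which range
   over the probability simplex as z ranges over the unit sphere; in these coordinates f is a
   quadratic with Hessian beta I, so its minimizer v = |z0|^2 satisfies
   f(y) - f(z0) >= beta/2 ||y|^2 - v|_2^2 >= beta/2 |y - z|_4^4,
   where z in [[z0]] carries the moduli of z0 and the phases of y.  Conversely
   f_sigma(y) <= f_sigma(z) and f(z) = f(z0) give
   f(y) - f(z0) <= sigma ||W||_2 |y - z|_2 <= sigma ||W||_2 n^(1/4) |y - z|_4.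
   Comparing the two bounds yields |y - z|_4^3 <= 2 sigma/beta ||W||_2 n^(1/4). *)

lemma power2_norm_vec: "(norm x)\<^sup>2 = (\<Sum>k\<in>UNIV. (norm (x $ k))\<^sup>2)"
  by (simp add: norm_vec_def L2_set_def sum_nonneg)

lemma spec_norm_nonneg: "0 \<le> spec_norm W"
  unfolding spec_norm_def by (rule onorm_pos_le) simp

lemma norm_matrix_vector_le_spec_norm: "norm (W *v x) \<le> spec_norm W * norm x"
  unfolding spec_norm_def by (rule onorm) simp

definition cinner :: "complex ^ 'n \<Rightarrow> complex ^ 'n \<Rightarrow> complex" where
  "cinner x v = (\<Sum>k\<in>UNIV. cnj (x $ k) * v $ k)"

lemma qform_eq_cinner: "qform W z = cinner z (W *v z)"
  unfolding qform_def cinner_def matrix_vector_mult_def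
  by (simp add: sum_distrib_left mult.assoc)

lemma cinner_diff_left: "cinner (x - y) v = cinner x v - cinner y v"
  unfolding cinner_def by (simp add: left_diff_distrib sum_subtractf)

lemma cinner_diff_right: "cinner x (v - w) = cinner x v - cinner x w"
  unfolding cinner_def by (simp add: right_diff_distrib sum_subtractf)

lemma norm_cinner_le: "cmod (cinner x v) \<le> norm x * norm v"
proof -
  have "cmod (cinner x v) \<le> (\<Sum>k\<in>UNIV. \<bar>cmod (x $ k)\<bar> * \<bar>cmod (v $ k)\<bar>)"
    unfolding cinner_def by (rule order_trans[OF norm_sum]) (simp add: norm_mult)
  also have "\<dots> \<le> norm x * norm v"
    unfolding norm_vec_def by (rule L2_set_mult_ineq)
  finally show ?thesis .
qed

lemma norm_qform_diff_le:
  "cmod (qform W z - qform W y) \<le> spec_norm W * (norm z + norm y) * norm (z - y)"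
proof -
  have "qform W z - qform W y = cinner (z - y) (W *v z) + cinner y (W *v (z - y))"
    by (simp add: qform_eq_cinner cinner_diff_left cinner_diff_right
          matrix_vector_mult_diff_distrib)
  also have "cmod \<dots>
      \<le> norm (z - y) * (spec_norm W * norm z) + norm y * (spec_norm W * norm (z - y))"
    by (intro norm_triangle_le add_mono order_trans[OF norm_cinner_le] mult_left_mono
          norm_matrix_vector_le_spec_norm norm_ge_zero)
  finally show ?thesis by (simp add: algebra_simps)
qed

lemma fobj_diff_le_if_fsig_le:
  assumes "\<sigma> \<ge> 0" "norm y = 1" "norm z = 1" "fsig a \<beta> \<sigma> W y \<le> fsig a \<beta> \<sigma> W z"
  shows "fobj a \<beta> y - fobj a \<beta> z \<le> \<sigma> * spec_norm W * norm (y - z)"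
proof -
  have "fobj a \<beta> y - fobj a \<beta> z \<le> \<sigma> / 2 * Re (qform W z - qform W y)"
    using assms(4) by (simp add: fsig_def algebra_simps)
  also have "\<dots> \<le> \<sigma> / 2 * (spec_norm W * 2 * norm (z - y))"
    using norm_qform_diff_le[of W z y] assms(1-3)
    by (intro mult_left_mono order_trans[OF complex_Re_le_cmod]) simp_all
  finally show ?thesis by (simp add: norm_minus_commute)
qed

lemma growth_at_minimum_on_convex:
  fixes G :: "'a::real_vector \<Rightarrow> real"
  assumes "convex S" "u \<in> S" "v \<in> S" "\<forall>w\<in>S. G v \<le> G w"
    and segment: "\<And>t. G (v + t *\<^sub>R (u - v)) - G v = t * L + t\<^sup>2 * Q"
  shows "Q \<le> G u - G v"
proof -
  have "0 \<le> L + t * Q" if "0 < t" "t \<le> 1" for t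
  proof -
    have "v + t *\<^sub>R (u - v) = (1 - t) *\<^sub>R v + t *\<^sub>R u"
      by (simp add: algebra_simps)
    also have "\<dots> \<in> S"
      using assms(1-3) that by (intro convexD) auto
    finally have "G v \<le> G (v + t *\<^sub>R (u - v))"
      using assms(4) by blast
    then have "0 \<le> t * (L + t * Q)"
      using segment[of t] by (simp add: power2_eq_square algebra_simps)
    then show ?thesis
      using that by (simp add: zero_le_mult_iff)
  qed
  then have "0 \<le> L"
    by (intro tendsto_lowerbound[of "\<lambda>t. L + t * Q" L "at_right 0"])
      (auto intro!: tendsto_eq_intros eventually_at_rightI[of 0 1])
  then show ?thesis
    using segment[of 1] by simp
qed

definition sq_moduli :: "complex ^ 'n \<Rightarrow> real ^ 'n" where
  "sq_moduli z = (\<chi> k. (cmod (z $ k))\<^sup>2)"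

definition fobj_sq :: "real ^ 'n \<Rightarrow> real \<Rightarrow> real ^ 'n \<Rightarrow> real" where
  "fobj_sq a \<beta> w = (a \<bullet> w + \<beta> * (norm w)\<^sup>2) / 2"

lemma fobj_eq_fobj_sq: "fobj a \<beta> z = fobj_sq a \<beta> (sq_moduli z)"
  unfolding fobj_def fobj_sq_def sq_moduli_def power2_norm_vec
  by (simp add: inner_vec_def sum_distrib_left sum_divide_distrib add_divide_distrib
        flip: power_mult)

lemma fobj_sq_segment:
  "fobj_sq a \<beta> (v + t *\<^sub>R (u - v)) - fobj_sq a \<beta> v
     = t * ((a \<bullet> (u - v)) / 2 + \<beta> * (v \<bullet> (u - v))) + t\<^sup>2 * (\<beta> / 2 * (norm (u - v))\<^sup>2)"
  unfolding fobj_sq_def power2_norm_eq_inner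
  by (simp add: inner_simps inner_commute power2_eq_square field_simps)

definition prob_simplex :: "(real ^ 'n) set" where
  "prob_simplex = {w. (\<forall>k. 0 \<le> w $ k) \<and> (\<Sum>k\<in>UNIV. w $ k) = 1}"

lemma convex_prob_simplex: "convex prob_simplex"
  unfolding convex_def prob_simplex_def
  by (auto simp: sum.distrib simp flip: sum_distrib_left)

lemma sq_moduli_in_prob_simplex: "norm z = 1 \<Longrightarrow> sq_moduli z \<in> prob_simplex"
  using power2_norm_vec[of z] by (simp add: prob_simplex_def sq_moduli_def)

lemma prob_simplex_sq_moduli:
  assumes "w \<in> prob_simplex"
  shows "\<exists>z. norm z = 1 \<and> sq_moduli z = w"
proof (intro exI conjI)
  let ?z = "\<chi> k. complex_of_real (sqrt (w $ k))"
  show "sq_moduli ?z = w"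
    using assms by (simp add: sq_moduli_def prob_simplex_def vec_eq_iff)
  then show "norm ?z = 1"
    using assms by (simp add: norm_vec_def L2_set_def prob_simplex_def)
qed

lemma fobj_sq_minimal_on_prob_simplex:
  assumes "\<forall>z. norm z = 1 \<longrightarrow> fobj a \<beta> z0 \<le> fobj a \<beta> z"
  shows "\<forall>w\<in>prob_simplex. fobj_sq a \<beta> (sq_moduli z0) \<le> fobj_sq a \<beta> w"
  using assms prob_simplex_sq_moduli by (metis fobj_eq_fobj_sq)

lemma fobj_sq_growth_at_minimum:
  assumes "u \<in> prob_simplex" "v \<in> prob_simplex"
    and "\<forall>w\<in>prob_simplex. fobj_sq a \<beta> v \<le> fobj_sq a \<beta> w"
  shows "\<beta> / 2 * (norm (u - v))\<^sup>2 \<le> fobj_sq a \<beta> u - fobj_sq a \<beta> v"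
  using growth_at_minimum_on_convex[OF convex_prob_simplex assms fobj_sq_segment] .

lemma powr_quarter_pow4: "0 \<le> (t::real) \<Longrightarrow> (t powr (1/4))^4 = t"
  using powr_realpow'[of "t powr (1/4)" 4] by (simp add: powr_powr)

lemma pow4_powr_quarter: "0 \<le> (t::real) \<Longrightarrow> (t^4) powr (1/4) = t"
  by (rule power_eq_imp_eq_base[of _ 4]) (simp_all add: powr_quarter_pow4)

lemma norm4_nonneg: "0 \<le> norm4 x"
  by (simp add: norm4_def)

lemma norm4_pow4: "(norm4 x)^4 = (\<Sum>k\<in>UNIV. (cmod (x $ k))^4)"
  unfolding norm4_def by (simp add: powr_quarter_pow4 sum_nonneg)

lemma norm_le_norm4: "norm x \<le> real CARD('n) powr (1/4) * norm4 (x :: complex ^ 'n)"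
proof -
  have "(norm x)^4 = (\<Sum>k\<in>UNIV. (cmod (x $ k))\<^sup>2 * 1)\<^sup>2"
    by (simp flip: power2_norm_vec power_mult)
  also have "\<dots> \<le> real CARD('n) * (\<Sum>k\<in>UNIV. (cmod (x $ k))^4)"
    using Cauchy_Schwarz_ineq_sum[of "\<lambda>k. (cmod (x $ k))\<^sup>2" "\<lambda>_. 1" UNIV]
    by (simp add: mult.commute flip: power_mult)
  finally have "((norm x)^4) powr (1/4)
      \<le> (real CARD('n) * (\<Sum>k\<in>UNIV. (cmod (x $ k))^4)) powr (1/4)"
    by (intro powr_mono2) simp_all
  then show ?thesis
    by (simp add: pow4_powr_quarter powr_mult sum_nonneg norm4_def)
qed

definition phase_align :: "complex ^ 'n \<Rightarrow> complex ^ 'n \<Rightarrow> complex ^ 'n" where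
  "phase_align z0 y = (\<chi> k. rcis (cmod (z0 $ k)) (Arg (y $ k)))"

lemma phase_align_in_phase_class: "phase_align z0 y \<in> phase_class z0"
  by (simp add: phase_align_def phase_class_def)

lemma norm_diff_phase_align:
  "cmod ((y - phase_align z0 y) $ k) = \<bar>cmod (y $ k) - cmod (z0 $ k)\<bar>"
proof -
  have "(y - phase_align z0 y) $ k
      = rcis (cmod (y $ k)) (Arg (y $ k)) - rcis (cmod (z0 $ k)) (Arg (y $ k))"
    by (simp add: phase_align_def rcis_cmod_Arg)
  also have "\<dots> = rcis (cmod (y $ k) - cmod (z0 $ k)) (Arg (y $ k))"
    by (simp add: rcis_def left_diff_distrib)
  finally show ?thesis by simp
qed

lemma phase_class_norm_eq: "z \<in> phase_class z0 \<Longrightarrow> norm z = norm z0"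
  by (simp add: phase_class_def norm_vec_def)

lemma phase_class_fobj_eq: "z \<in> phase_class z0 \<Longrightarrow> fobj a \<beta> z = fobj a \<beta> z0"
  by (simp add: phase_class_def fobj_def)

lemma pow4_abs_diff_le:
  fixes p q :: real
  assumes "0 \<le> p" "0 \<le> q"
  shows "\<bar>p - q\<bar>^4 \<le> (p\<^sup>2 - q\<^sup>2)\<^sup>2"
proof -
  have "(p - q)\<^sup>2 = \<bar>p - q\<bar> * \<bar>p - q\<bar>"
    by (simp add: power2_eq_square)
  also have "\<dots> \<le> \<bar>p - q\<bar> * (p + q)"
    using assms by (intro mult_left_mono) auto
  also have "\<dots> = \<bar>p\<^sup>2 - q\<^sup>2\<bar>"
    using assms by (simp add: power2_eq_square square_diff_square_factored abs_mult mult.commute)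
  finally have "((p - q)\<^sup>2)\<^sup>2 \<le> \<bar>p\<^sup>2 - q\<^sup>2\<bar>\<^sup>2"
    by (intro power_mono) simp_all
  then show ?thesis
    by (simp flip: power_mult)
qed

lemma fobj_growth_phase_align:
  assumes "0 \<le> \<beta>" "norm z0 = 1" "norm y = 1"
    and "\<forall>z. norm z = 1 \<longrightarrow> fobj a \<beta> z0 \<le> fobj a \<beta> z"
  shows "\<beta> / 2 * (norm4 (y - phase_align z0 y))^4 \<le> fobj a \<beta> y - fobj a \<beta> z0"
proof -
  have "(norm4 (y - phase_align z0 y))^4 = (\<Sum>k\<in>UNIV. \<bar>cmod (y $ k) - cmod (z0 $ k)\<bar>^4)"
    by (simp only: norm4_pow4 norm_diff_phase_align)
  also have "\<dots> \<le> (\<Sum>k\<in>UNIV. ((cmod (y $ k))\<^sup>2 - (cmod (z0 $ k))\<^sup>2)\<^sup>2)"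
    by (intro sum_mono pow4_abs_diff_le) simp_all
  also have "\<dots> = (norm (sq_moduli y - sq_moduli z0))\<^sup>2"
    by (simp add: power2_norm_vec sq_moduli_def)
  finally have "\<beta> / 2 * (norm4 (y - phase_align z0 y))^4
      \<le> \<beta> / 2 * (norm (sq_moduli y - sq_moduli z0))\<^sup>2"
    using assms(1) by (simp add: mult_left_mono)
  also have "\<dots> \<le> fobj a \<beta> y - fobj a \<beta> z0"
    unfolding fobj_eq_fobj_sq
    using assms(2-4)
    by (intro fobj_sq_growth_at_minimum fobj_sq_minimal_on_prob_simplex sq_moduli_in_prob_simplex)
  finally show ?thesis .
qed

lemma le_root3_if_pow4_le:
  fixes e K :: real
  assumes "0 \<le> e" "0 \<le> K" "e^4 \<le> K * e"
  shows "e \<le> root 3 K"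
proof (cases "e = 0")
  case False
  then have "e^3 \<le> K"
    using assms by (simp add: power_numeral_reduce mult.commute[of K])
  then show ?thesis
    using assms(1) real_root_le_mono[of 3 "e^3" K] real_root_power_cancel[of 3 e] by simp
qed (use assms in simp)

theorem theorem7:
  fixes a :: "real ^ 'n" and \<beta> \<sigma> :: real and W :: "complex ^ 'n ^ 'n"
    and z0 y :: "complex ^ 'n"
  assumes "\<beta> > 0" and "hermitian W" and "\<sigma> > 0"
    and "norm z0 = 1" and "\<forall>z. norm z = 1 \<longrightarrow> fobj a \<beta> z0 \<le> fobj a \<beta> z"
    and "norm y = 1"
    and "\<forall>z\<in>phase_class z0. fsig a \<beta> \<sigma> W y \<le> fsig a \<beta> \<sigma> W z"
  shows "(INF z\<in>phase_class z0. norm4 (y - z))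
           \<le> root 3 (2 * \<sigma> / \<beta> * spec_norm W * real CARD('n) powr (1/4))"
proof -
  define z where "z = phase_align z0 y"
  define e where "e = norm4 (y - z)"
  define C where "C = real CARD('n) powr (1/4)"
  have z_in: "z \<in> phase_class z0"
    unfolding z_def by (rule phase_align_in_phase_class)
  have z_norm: "norm z = 1"
    using phase_class_norm_eq[OF z_in] assms(4) by simp
  have "\<beta> / 2 * e^4 \<le> fobj a \<beta> y - fobj a \<beta> z0"
    unfolding e_def z_def using assms(1,4-6) by (intro fobj_growth_phase_align) auto
  also have "\<dots> = fobj a \<beta> y - fobj a \<beta> z"
    using phase_class_fobj_eq[OF z_in] by simp
  also have "\<dots> \<le> \<sigma> * spec_norm W * norm (y - z)"
    using assms(3,6,7) z_in z_norm by (intro fobj_diff_le_if_fsig_le) auto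
  also have "\<dots> \<le> \<sigma> * spec_norm W * (C * e)"
    unfolding C_def e_def using assms(3)
    by (intro mult_left_mono norm_le_norm4 mult_nonneg_nonneg spec_norm_nonneg) auto
  finally have "e^4 \<le> (2 * \<sigma> / \<beta> * spec_norm W * C) * e"
    using assms(1) by (simp add: field_simps)
  then have "e \<le> root 3 (2 * \<sigma> / \<beta> * spec_norm W * C)"
    using assms(1,3)
    by (intro le_root3_if_pow4_le) (auto simp: e_def C_def norm4_nonneg spec_norm_nonneg)
  moreover have "(INF z\<in>phase_class z0. norm4 (y - z)) \<le> e"
    unfolding e_def using z_in norm4_nonneg by (intro cINF_lower bdd_belowI[of _ 0]) auto
  ultimately show ?thesis
    unfolding C_def by linarith
qed

end
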